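(* Let $\gamma\ge1$, let $\mathcal{B}$ be a countably infinite subset of $\{z\in\mathbb{C}:\operatorname{Re}(z)\ge\gamma\}$, $\theta_b(z)=1/(z+b)$, and let $s>0$ with $\sum_{b\in\mathcal{B}}|b|^{-2s}<\infty$. Let $H\subset\mathbb{C}$ be a bounded, mildly regular open set with $H\supset G_\gamma=\{z:|z-1/(2\gamma)|<1/(2\gamma)\}$ and $\operatorname{Re}(z)>0$ on $H$. Let $L_s:C_{\mathbb{C}}(\bar H)\to C_{\mathbb{C}}(\bar H)$, $(L_sf)(z)=\sum_{b\in\mathcal{B}}|z+b|^{-2s}f(\theta_b(z))$, and let $v_s$ be a strictly positive continuous eigenfunction of $L_s$ on $\bar H$ (unique up to scalar multiples). For $R>2$ let $\mathcal{B}_R=\{b\in\mathcal{B}:|b|\le R\}$, $\mathcal{B}_R'=\{b\in\mathcal{B}:|b|>R\}$, and for $\alpha\ge0$ define $L_{s,R,\alpha}:C_{\mathbb{C}}(\bar H)\to C_{\mathbb{C}}(\bar H)$ by $$(L_{s,R,\alpha}f)(z)=\sum_{b\in\mathcal{B}_R}\frac{f(\theta_b(z))}{|z+b|^{2s}}+\alpha f(0).$$ Assume there exist $\delta_{s,R}>0$ and $\eta_{s,R}\ge0$ such that for all $z\in\bar H$ $$\eta_{s,R}v_s(0)\le\sum_{b\in\mathcal{B}_R'}\frac{1}{|z+b|^{2s}}v_s(\theta_b(z))\le\delta_{s,R}v_s(0).$$ Then, with $L_{s,R+}=L_{s,R,\delta_{s,R}}$ and $L_{s,R-}=L_{s,R,\eta_{s,R}}$,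 $$r(L_{s,R-})\le r(L_s)\le r(L_{s,R+}),$$ where $r$ denotes the spectral radius.
   Context: A bounded open set $H\subset\mathbb{R}^n$ is mildly regular if there exist $\eta>0$ and $M\ge1$ such that whenever $x,y\in H$ and $\|x-y\|<\eta$, there is a Lipschitz map $\psi:[0,1]\to H$ with $\psi(0)=x$, $\psi(1)=y$ and $\int_0^1\|\psi'(t)\|\,dt\le M\|x-y\|$. $C_{\mathbb{C}}(\bar H)$ is the space of continuous complex functions on $\bar H$ with sup norm; $r(L)=\lim_k\|L^k\|^{1/k}$. Note $0\in\bar H$. *)

theory Defs
  imports "HOL-Analysis.Analysis"
begin

definition mildly_regular :: "complex set \<Rightarrow> bool" where
  "mildly_regular H \<longleftrightarrow> (\<exists>\<eta>::real>0. \<exists>M::real\<ge>1. \<forall>x\<in>H. \<forall>y\<in>H. dist x y < \<eta> \<longrightarrow>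
     (\<exists>\<psi> :: real \<Rightarrow> complex. (\<exists>C::real. lipschitz_on C {0..1} \<psi>) \<and> \<psi> ` {0..1} \<subseteq> H \<and>
        \<psi> 0 = x \<and> \<psi> 1 = y \<and>
        (\<lambda>t. norm (vector_derivative \<psi> (at t))) integrable_on {0..1} \<and>
        integral {0..1} (\<lambda>t. norm (vector_derivative \<psi> (at t))) \<le> M * dist x y))"

definition supnorm :: "complex set \<Rightarrow> (complex \<Rightarrow> complex) \<Rightarrow> real" where
  "supnorm K f = (SUP z\<in>K. cmod (f z))"

definition opnorm :: "complex set \<Rightarrow> ((complex \<Rightarrow> complex) \<Rightarrow> (complex \<Rightarrow> complex)) \<Rightarrow> real" where
  "opnorm K L = (SUP f\<in>{f. continuous_on K f \<and> supnorm K f \<le> 1}. supnorm K (L f))"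

definition spectral_radius :: "complex set \<Rightarrow> ((complex \<Rightarrow> complex) \<Rightarrow> (complex \<Rightarrow> complex)) \<Rightarrow> real" where
  "spectral_radius K L = lim (\<lambda>k. opnorm K (L ^^ k) powr (1 / real k))"

definition Lop :: "complex set \<Rightarrow> real \<Rightarrow> (complex \<Rightarrow> complex) \<Rightarrow> complex \<Rightarrow> complex" where
  "Lop B s f z = (\<Sum>\<^sub>\<infinity>b\<in>B. complex_of_real (cmod (z + b) powr (-2 * s)) * f (1 / (z + b)))"

definition LopR :: "complex set \<Rightarrow> real \<Rightarrow> real \<Rightarrow> real \<Rightarrow> (complex \<Rightarrow> complex) \<Rightarrow> complex \<Rightarrow> complex" where
  "LopR B s R \<alpha> f z = (\<Sum>b\<in>{b\<in>B. cmod b \<le> R}. complex_of_real (cmod (z + b) powr (-2 * s)) * f (1 / (z + b)))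
      + complex_of_real \<alpha> * f 0"

end

theory Submission
  imports Defs
begin

text \<open>A strictly positive eigenfunction v of L_s has a real eigenvalue \<lambda> \<ge> 0, and comparing
  functions with multiples of v gives \<lambda>^k \<le> \<parallel>L_s^k\<parallel> \<le> \<lambda>^k (max v / min v), so r(L_s) = \<lambda>.
  Splitting the series L_s v at |b| = R, the tail hypothesis says L_{s,R-} v \<le> \<lambda> v \<le> L_{s,R+} v
  on the closure of H. As the truncated operators are positive, the first inequality iterates to
  |L_{s,R-}^k f| \<le> \<lambda>^k \<parallel>f\<parallel> v / min v and the second to L_{s,R+}^k v \<ge> \<lambda>^k v. For these
  operators the limit defining the spectral radius exists by Fekete's lemma, their operator norms
  being submultiplicative.\<close>

section \<open>Fekete's lemma for submultiplicative sequences\<close>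

lemma submultiplicative_le_power_mult:
  fixes a :: "nat \<Rightarrow> real"
  assumes nonneg: "\<And>n. a n \<ge> 0" and submult: "\<And>m n. a (m + n) \<le> a m * a n"
  shows "a (q * m + r) \<le> a m ^ q * a r"
proof (induction q)
  case (Suc q)
  have "a (Suc q * m + r) = a (m + (q * m + r))" by (simp add: algebra_simps)
  also have "\<dots> \<le> a m * a (q * m + r)" by (rule submult)
  also have "\<dots> \<le> a m * (a m ^ q * a r)" using Suc nonneg by (simp add: mult_left_mono)
  finally show ?case by (simp add: algebra_simps)
qed simp

lemma submultiplicative_bounded_by_power:
  fixes a :: "nat \<Rightarrow> real"
  assumes nonneg: "\<And>n. a n \<ge> 0" and submult: "\<And>m n. a (m + n) \<le> a m * a n"
    and "m \<ge> 1" "t > 0" "a m \<le> t ^ m"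
  obtains D where "D > 0" "\<And>n. a n \<le> t ^ n * D"
proof
  define C where "C = (\<Sum>r<m. a r) + 1"
  define D where "D = C * max 1 ((1 / t) ^ m)"
  have C: "a r \<le> C" if "r < m" for r
    using that nonneg member_le_sum[of r "{..<m}" a] by (simp add: C_def)
  have "C \<ge> 1" using nonneg by (simp add: C_def sum_nonneg)
  then show "D > 0" by (simp add: D_def)
  show "a n \<le> t ^ n * D" for n
  proof -
    define q r where "q = n div m" and "r = n mod m"
    have n: "n = q * m + r" and "r < m" using \<open>m \<ge> 1\<close> by (simp_all add: q_def r_def)
    have tqm: "(t ^ m) ^ q \<le> t ^ n * max 1 ((1 / t) ^ m)"
    proof (cases "t \<ge> 1")
      case True
      have "(t ^ m) ^ q \<le> t ^ n" using True n by (simp add: power_mult[symmetric] mult.commute power_increasing)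
      also have "\<dots> \<le> t ^ n * max 1 ((1 / t) ^ m)" using \<open>t > 0\<close> by (simp add: mult_le_cancel_left1)
      finally show ?thesis .
    next
      case False
      have "t ^ m \<le> t ^ r" using False \<open>t > 0\<close> \<open>r < m\<close> by (intro power_decreasing) auto
      then have "t ^ (q * m) * t ^ m \<le> t ^ n" using \<open>t > 0\<close> by (simp add: n power_add mult_left_mono)
      then have "(t ^ m) ^ q \<le> t ^ n * (1 / t) ^ m"
        using \<open>t > 0\<close> by (simp add: field_simps power_divide power_mult[symmetric] mult.commute)
      also have "\<dots> \<le> t ^ n * max 1 ((1 / t) ^ m)" using \<open>t > 0\<close> by (simp add: mult_left_mono)
      finally show ?thesis .
    qed
    have "a n \<le> a m ^ q * a r" using submultiplicative_le_power_mult[OF nonneg submult, of q m r] n by simp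
    also have "\<dots> \<le> (t ^ m) ^ q * C"
      using assms(4,5) C[OF \<open>r < m\<close>] nonneg by (intro mult_mono power_mono) auto
    also have "\<dots> \<le> t ^ n * D"
      using mult_right_mono[OF tqm, of C] \<open>C \<ge> 1\<close> by (simp add: D_def algebra_simps)
    finally show ?thesis .
  qed
qed

lemma powr_inverse_le_mult_powr:
  fixes x t D :: real
  assumes "0 \<le> x" "x \<le> t ^ k * D" "t \<ge> 0" "D > 0" "k \<ge> 1"
  shows "x powr (1 / real k) \<le> t * D powr (1 / real k)"
proof -
  have "x powr (1 / real k) \<le> (t ^ k * D) powr (1 / real k)" using assms by (intro powr_mono2) auto
  also have "\<dots> = (t ^ k) powr (1 / real k) * D powr (1 / real k)" using assms by (simp add: powr_mult)
  also have "(t ^ k) powr (1 / real k) = t"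
    using assms by (simp add: root_powr_inverse[symmetric] real_root_power_cancel)
  finally show ?thesis .
qed

lemma le_powr_inverse_of_power_le:
  fixes x t :: real
  assumes "t ^ k \<le> x" "t \<ge> 0" "k \<ge> 1"
  shows "t \<le> x powr (1 / real k)"
proof -
  have "t = (t ^ k) powr (1 / real k)"
    using assms by (simp add: root_powr_inverse[symmetric] real_root_power_cancel)
  also have "\<dots> \<le> x powr (1 / real k)" using assms by (intro powr_mono2) auto
  finally show ?thesis .
qed

lemma tendsto_mult_powr_inverse_real_of_nat:
  fixes t D :: real
  assumes "D > 0"
  shows "(\<lambda>k. t * D powr (1 / real k)) \<longlonglongrightarrow> t"
proof -
  have "(\<lambda>k. t * D powr (1 / real k)) \<longlonglongrightarrow> t * D powr 0"
    using assms by (intro tendsto_intros LIMSEQ_inverse_real_of_nat[simplified inverse_eq_divide]) auto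
  then show ?thesis using assms by simp
qed

lemma convergent_root_submultiplicative:
  fixes a :: "nat \<Rightarrow> real"
  assumes nonneg: "\<And>n. a n \<ge> 0" and submult: "\<And>m n. a (m + n) \<le> a m * a n"
  shows "convergent (\<lambda>n. a n powr (1 / real n))"
proof -
  define x where "x n = a n powr (1 / real n)" for n
  define L where "L = Inf (x ` {1..})"
  have "bdd_below (x ` {1..})" by (auto simp: x_def intro: bdd_belowI[of _ 0])
  then have L_le: "L \<le> x n" if "n \<ge> 1" for n unfolding L_def using that by (auto intro: cInf_lower)
  have "L \<ge> 0" unfolding L_def x_def by (auto intro: cInf_greatest)
  have "x \<longlonglongrightarrow> L"
  proof (rule order_tendstoI)
    show "\<forall>\<^sub>F n in sequentially. y < x n" if "y < L" for y
      using that L_le by (auto intro!: eventually_sequentiallyI[of 1] less_le_trans[OF _ L_le])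
  next
    fix y assume "L < y"
    define t where "t = (L + y) / 2"
    have "t > 0" "L < t" "t < y" using \<open>L < y\<close> \<open>L \<ge> 0\<close> by (auto simp: t_def)
    then obtain m where "m \<ge> 1" "x m < t"
      using cInf_lessD[of "x ` {1..}" t] unfolding L_def by auto
    then have "a m \<le> t ^ m"
      using nonneg[of m] power_mono[of "x m" t m]
      by (simp add: x_def root_powr_inverse[symmetric])
    then obtain D where "D > 0" and D: "\<And>n. a n \<le> t ^ n * D"
      using submultiplicative_bounded_by_power[OF nonneg submult \<open>m \<ge> 1\<close> \<open>t > 0\<close>] by metis
    have "\<forall>\<^sub>F n in sequentially. t * D powr (1 / real n) < y"
      using tendsto_mult_powr_inverse_real_of_nat[OF \<open>D > 0\<close>] \<open>t < y\<close> by (rule order_tendstoD)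
    then show "\<forall>\<^sub>F n in sequentially. x n < y"
      using eventually_ge_at_top[of 1]
    proof eventually_elim
      case (elim n)
      have "x n \<le> t * D powr (1 / real n)"
        unfolding x_def using \<open>t > 0\<close> \<open>D > 0\<close> elim(2)
        by (intro powr_inverse_le_mult_powr[OF nonneg D]) auto
      with elim(1) show ?case by simp
    qed
  qed
  then show ?thesis unfolding x_def convergent_def by blast
qed

section \<open>Sup norm and operator norm\<close>

lemma norm_le_supnorm:
  assumes "compact K" "continuous_on K f" "z \<in> K"
  shows "cmod (f z) \<le> supnorm K f"
proof -
  have "compact ((\<lambda>z. cmod (f z)) ` K)"
    using assms by (intro compact_continuous_image continuous_intros) auto
  then have "bdd_above ((\<lambda>z. cmod (f z)) ` K)" by (intro bounded_imp_bdd_above compact_imp_bounded)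
  then show ?thesis unfolding supnorm_def using assms by (intro cSUP_upper) auto
qed

lemma supnorm_le:
  assumes "K \<noteq> {}" "\<And>z. z \<in> K \<Longrightarrow> cmod (f z) \<le> C"
  shows "supnorm K f \<le> C"
  unfolding supnorm_def using assms by (intro cSUP_least) auto

lemma opnorm_le:
  assumes "K \<noteq> {}"
    and "\<And>f z. continuous_on K f \<Longrightarrow> supnorm K f \<le> 1 \<Longrightarrow> z \<in> K \<Longrightarrow> cmod (L f z) \<le> C"
  shows "opnorm K L \<le> C"
proof -
  have "supnorm K (\<lambda>_. 0) \<le> 1" using assms(1) by (intro supnorm_le) auto
  then have "{f. continuous_on K f \<and> supnorm K f \<le> 1} \<noteq> {}" by (auto intro!: exI[of _ "\<lambda>_. 0"])
  then show ?thesis unfolding opnorm_def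
    by (rule cSUP_least) (use assms in \<open>auto intro!: supnorm_le\<close>)
qed

lemma norm_le_opnorm:
  assumes "K \<noteq> {}"
    and bound: "\<And>f z. continuous_on K f \<Longrightarrow> supnorm K f \<le> 1 \<Longrightarrow> z \<in> K \<Longrightarrow> cmod (L f z) \<le> C"
    and f: "continuous_on K f" "supnorm K f \<le> 1" and "z \<in> K"
  shows "cmod (L f z) \<le> opnorm K L"
proof -
  have "bdd_above ((\<lambda>z. cmod (L f z)) ` K)" by (rule bdd_aboveI2) (rule bound[OF f])
  then have "cmod (L f z) \<le> supnorm K (L f)" unfolding supnorm_def using \<open>z \<in> K\<close> by (intro cSUP_upper) auto
  moreover have "bdd_above ((\<lambda>f. supnorm K (L f)) ` {f. continuous_on K f \<and> supnorm K f \<le> 1})"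
    using assms(1) bound by (auto intro!: bdd_aboveI2 supnorm_le)
  then have "supnorm K (L f) \<le> opnorm K L" unfolding opnorm_def using f by (intro cSUP_upper) auto
  ultimately show ?thesis by simp
qed

text \<open>The operators are maps on all functions \<open>complex \<Rightarrow> complex\<close>; to act on \<open>C(K)\<close>
  they must only depend on the values on \<open>K\<close> and preserve continuity on \<open>K\<close>.\<close>

definition bounded_op_on :: "complex set \<Rightarrow> ((complex \<Rightarrow> complex) \<Rightarrow> (complex \<Rightarrow> complex)) \<Rightarrow> real \<Rightarrow> bool" where
  "bounded_op_on K L N \<longleftrightarrow>
     (\<forall>c g. L (\<lambda>z. c * g z) = (\<lambda>z. c * L g z))
   \<and> (\<forall>g h. (\<forall>z\<in>K. g z = h z) \<longrightarrow> (\<forall>z\<in>K. L g z = L h z))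
   \<and> N \<ge> 0 \<and> (\<forall>g G. (\<forall>z\<in>K. cmod (g z) \<le> G) \<longrightarrow> (\<forall>z\<in>K. cmod (L g z) \<le> N * G))
   \<and> (\<forall>g. continuous_on K g \<longrightarrow> continuous_on K (L g))"

lemma bounded_op_onI:
  assumes "\<And>c g. L (\<lambda>z. c * g z) = (\<lambda>z. c * L g z)"
    and "\<And>g h z. (\<And>z. z \<in> K \<Longrightarrow> g z = h z) \<Longrightarrow> z \<in> K \<Longrightarrow> L g z = L h z"
    and "N \<ge> 0"
    and "\<And>g G z. (\<And>z. z \<in> K \<Longrightarrow> cmod (g z) \<le> G) \<Longrightarrow> z \<in> K \<Longrightarrow> cmod (L g z) \<le> N * G"
    and "\<And>g. continuous_on K g \<Longrightarrow> continuous_on K (L g)"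
  shows "bounded_op_on K L N"
  unfolding bounded_op_on_def using assms by blast

lemma
  assumes "bounded_op_on K L N"
  shows bounded_op_on_cmult: "L (\<lambda>z. c * g z) = (\<lambda>z. c * L g z)"
    and bounded_op_on_cong: "(\<And>z. z \<in> K \<Longrightarrow> g z = h z) \<Longrightarrow> z \<in> K \<Longrightarrow> L g z = L h z"
    and bounded_op_on_nonneg: "N \<ge> 0"
    and bounded_op_on_norm_le: "(\<And>z. z \<in> K \<Longrightarrow> cmod (g z) \<le> G) \<Longrightarrow> z \<in> K \<Longrightarrow> cmod (L g z) \<le> N * G"
    and bounded_op_on_continuous: "continuous_on K g \<Longrightarrow> continuous_on K (L g)"
  using assms unfolding bounded_op_on_def by blast+

lemma bounded_op_on_funpow:
  assumes L: "bounded_op_on K L N"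
  shows "bounded_op_on K (L ^^ k) (N ^ k)"
proof (induction k)
  case 0
  show ?case by (rule bounded_op_onI) simp_all
next
  case (Suc k)
  show ?case
  proof (rule bounded_op_onI)
    fix c :: complex and g :: "complex \<Rightarrow> complex"
    show "(L ^^ Suc k) (\<lambda>z. c * g z) = (\<lambda>z. c * (L ^^ Suc k) g z)"
      by (simp only: funpow.simps comp_def bounded_op_on_cmult[OF Suc] bounded_op_on_cmult[OF L])
  next
    fix g h :: "complex \<Rightarrow> complex" and z assume gh: "\<And>z. z \<in> K \<Longrightarrow> g z = h z" and "z \<in> K"
    have "L ((L ^^ k) g) z = L ((L ^^ k) h) z"
      by (rule bounded_op_on_cong[OF L _ \<open>z \<in> K\<close>]) (rule bounded_op_on_cong[OF Suc gh])
    then show "(L ^^ Suc k) g z = (L ^^ Suc k) h z" by simp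
  next
    show "0 \<le> N ^ Suc k" using bounded_op_on_nonneg[OF L] by simp
  next
    fix g :: "complex \<Rightarrow> complex" and G z assume "\<And>z. z \<in> K \<Longrightarrow> cmod (g z) \<le> G" and "z \<in> K"
    then have "cmod (L ((L ^^ k) g) z) \<le> N * (N ^ k * G)"
      by (intro bounded_op_on_norm_le[OF L _ \<open>z \<in> K\<close>] bounded_op_on_norm_le[OF Suc])
    then show "cmod ((L ^^ Suc k) g z) \<le> N ^ Suc k * G" by (simp add: mult.assoc)
  next
    fix g :: "complex \<Rightarrow> complex" assume "continuous_on K g"
    then show "continuous_on K ((L ^^ Suc k) g)"
      by (simp add: bounded_op_on_continuous[OF L] bounded_op_on_continuous[OF Suc])
  qed
qed

lemma norm_le_opnorm_bounded_op:
  assumes L: "bounded_op_on K L N" and "compact K" "K \<noteq> {}"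
    and "continuous_on K f" "supnorm K f \<le> 1" "z \<in> K"
  shows "cmod (L f z) \<le> opnorm K L"
proof (rule norm_le_opnorm[OF \<open>K \<noteq> {}\<close> _ assms(4-6)])
  fix f z assume f: "continuous_on K f" "supnorm K f \<le> 1" and "z \<in> K"
  then have "\<And>w. w \<in> K \<Longrightarrow> cmod (f w) \<le> 1"
    using norm_le_supnorm[OF \<open>compact K\<close> f(1)] by fastforce
  then show "cmod (L f z) \<le> N" using bounded_op_on_norm_le[OF L _ \<open>z \<in> K\<close>, of f 1] by simp
qed

lemma opnorm_nonneg:
  assumes "bounded_op_on K L N" "compact K" "K \<noteq> {}"
  shows "opnorm K L \<ge> 0"
proof -
  obtain z where "z \<in> K" using assms by auto
  have "supnorm K (\<lambda>_. 0) \<le> 1" using assms by (intro supnorm_le) auto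
  then have "cmod (L (\<lambda>_. 0) z) \<le> opnorm K L"
    using \<open>z \<in> K\<close> by (intro norm_le_opnorm_bounded_op[OF assms]) auto
  then show ?thesis by (meson norm_ge_zero order_trans)
qed

lemma norm_le_opnorm_mult_supnorm:
  assumes L: "bounded_op_on K L N" and K: "compact K" "K \<noteq> {}"
    and "continuous_on K g" "z \<in> K"
  shows "cmod (L g z) \<le> opnorm K L * supnorm K g"
proof -
  define S where "S = supnorm K g"
  have g_le: "cmod (g w) \<le> S" if "w \<in> K" for w
    unfolding S_def using norm_le_supnorm[OF K(1) \<open>continuous_on K g\<close> that] .
  show ?thesis
  proof (cases "S = 0")
    case True
    have "L g z = L (\<lambda>w. 0 * g w) z"
      by (rule bounded_op_on_cong[OF L _ \<open>z \<in> K\<close>]) (use g_le True in auto)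
    also have "\<dots> = 0 * L g z" by (subst bounded_op_on_cmult[OF L]) (rule refl)
    finally show ?thesis using True by (simp add: S_def)
  next
    case False
    have "S \<ge> 0" using g_le[OF \<open>z \<in> K\<close>] by (meson norm_ge_zero order_trans)
    with False have "S > 0" by simp
    define h where "h w = complex_of_real (1 / S) * g w" for w
    have "continuous_on K h" unfolding h_def using \<open>continuous_on K g\<close> by (intro continuous_intros)
    moreover have "supnorm K h \<le> 1"
    proof (rule supnorm_le[OF K(2)])
      fix w assume "w \<in> K"
      have "cmod (h w) = cmod (g w) / S" using \<open>S > 0\<close> by (simp add: h_def norm_mult norm_divide)
      also have "\<dots> \<le> 1" using g_le[OF \<open>w \<in> K\<close>] \<open>S > 0\<close> by (simp add: divide_le_eq)
      finally show "cmod (h w) \<le> 1" .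
    qed
    ultimately have "cmod (L h z) \<le> opnorm K L" by (rule norm_le_opnorm_bounded_op[OF L K _ _ \<open>z \<in> K\<close>])
    moreover have "L h z = complex_of_real (1 / S) * L g z" unfolding h_def by (subst bounded_op_on_cmult[OF L]) (rule refl)
    ultimately have "cmod (L g z) / S \<le> opnorm K L" using \<open>S > 0\<close> by (simp add: norm_mult norm_divide)
    then have "cmod (L g z) \<le> opnorm K L * S" by (simp add: pos_divide_le_eq[OF \<open>S > 0\<close>])
    then show ?thesis by (simp only: S_def)
  qed
qed

lemma opnorm_funpow_add_le:
  assumes L: "bounded_op_on K L N" and K: "compact K" "K \<noteq> {}"
  shows "opnorm K (L ^^ (m + n)) \<le> opnorm K (L ^^ m) * opnorm K (L ^^ n)"
proof (rule opnorm_le[OF K(2)])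
  fix f z assume f: "continuous_on K f" "supnorm K f \<le> 1" and "z \<in> K"
  note Lm = bounded_op_on_funpow[OF L, of m] and Ln = bounded_op_on_funpow[OF L, of n]
  have "cmod ((L ^^ (m + n)) f z) = cmod ((L ^^ m) ((L ^^ n) f) z)" by (simp add: funpow_add)
  also have "\<dots> \<le> opnorm K (L ^^ m) * supnorm K ((L ^^ n) f)"
    by (rule norm_le_opnorm_mult_supnorm[OF Lm K bounded_op_on_continuous[OF Ln f(1)] \<open>z \<in> K\<close>])
  also have "supnorm K ((L ^^ n) f) \<le> opnorm K (L ^^ n)"
    by (rule supnorm_le[OF K(2)]) (rule norm_le_opnorm_bounded_op[OF Ln K f])
  then have "opnorm K (L ^^ m) * supnorm K ((L ^^ n) f) \<le> opnorm K (L ^^ m) * opnorm K (L ^^ n)"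
    by (rule mult_left_mono[OF _ opnorm_nonneg[OF Lm K]])
  finally show "cmod ((L ^^ (m + n)) f z) \<le> opnorm K (L ^^ m) * opnorm K (L ^^ n)" .
qed

section \<open>Spectral radius\<close>

lemma spectral_radius_eqI:
  assumes "t \<ge> 0" "D > 0"
    and lower: "\<And>k. t ^ k \<le> opnorm K (L ^^ k)" and upper: "\<And>k. opnorm K (L ^^ k) \<le> t ^ k * D"
  shows "spectral_radius K L = t"
proof -
  have "(\<lambda>k. opnorm K (L ^^ k) powr (1 / real k)) \<longlonglongrightarrow> t"
  proof (rule tendsto_sandwich[OF _ _ tendsto_const tendsto_mult_powr_inverse_real_of_nat[OF \<open>D > 0\<close>]])
    show "\<forall>\<^sub>F k in sequentially. t \<le> opnorm K (L ^^ k) powr (1 / real k)"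
      using eventually_ge_at_top[of 1]
    proof eventually_elim
      case (elim k)
      show ?case by (rule le_powr_inverse_of_power_le[OF lower \<open>t \<ge> 0\<close> elim])
    qed
    show "\<forall>\<^sub>F k in sequentially. opnorm K (L ^^ k) powr (1 / real k) \<le> t * D powr (1 / real k)"
      using eventually_ge_at_top[of 1]
    proof eventually_elim
      case (elim k)
      have "0 \<le> opnorm K (L ^^ k)" using lower[of k] \<open>t \<ge> 0\<close> by (meson order_trans zero_le_power)
      then show ?case by (rule powr_inverse_le_mult_powr[OF _ upper \<open>t \<ge> 0\<close> \<open>D > 0\<close> elim])
    qed
  qed
  then show ?thesis unfolding spectral_radius_def by (rule limI)
qed

lemma tendsto_root_opnorm_spectral_radius:
  assumes "bounded_op_on K L N" "compact K" "K \<noteq> {}"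
  shows "(\<lambda>k. opnorm K (L ^^ k) powr (1 / real k)) \<longlonglongrightarrow> spectral_radius K L"
proof -
  have "convergent (\<lambda>k. opnorm K (L ^^ k) powr (1 / real k))"
    using opnorm_nonneg[OF bounded_op_on_funpow[OF assms(1)] assms(2,3)] opnorm_funpow_add_le[OF assms]
    by (rule convergent_root_submultiplicative)
  then show ?thesis unfolding spectral_radius_def by (rule convergent_LIMSEQ_iff[THEN iffD1])
qed

lemma spectral_radius_le:
  assumes L: "bounded_op_on K L N" and K: "compact K" "K \<noteq> {}"
    and "t \<ge> 0" "D > 0" and upper: "\<And>k. opnorm K (L ^^ k) \<le> t ^ k * D"
  shows "spectral_radius K L \<le> t"
proof (rule LIMSEQ_le[OF tendsto_root_opnorm_spectral_radius[OF L K]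
      tendsto_mult_powr_inverse_real_of_nat[OF \<open>D > 0\<close>]])
  show "\<exists>N. \<forall>k\<ge>N. opnorm K (L ^^ k) powr (1 / real k) \<le> t * D powr (1 / real k)"
  proof (intro exI[of _ 1] allI impI)
    fix k :: nat assume "1 \<le> k"
    then show "opnorm K (L ^^ k) powr (1 / real k) \<le> t * D powr (1 / real k)"
      by (rule powr_inverse_le_mult_powr[OF opnorm_nonneg[OF bounded_op_on_funpow[OF L] K] upper \<open>t \<ge> 0\<close> \<open>D > 0\<close>])
  qed
qed

lemma spectral_radius_ge:
  assumes L: "bounded_op_on K L N" and K: "compact K" "K \<noteq> {}"
    and "t \<ge> 0" and lower: "\<And>k. t ^ k \<le> opnorm K (L ^^ k)"
  shows "t \<le> spectral_radius K L"
proof (rule LIMSEQ_le[OF tendsto_const tendsto_root_opnorm_spectral_radius[OF L K]])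
  show "\<exists>N. \<forall>k\<ge>N. t \<le> opnorm K (L ^^ k) powr (1 / real k)"
  proof (intro exI[of _ 1] allI impI)
    fix k :: nat assume "1 \<le> k"
    then show "t \<le> opnorm K (L ^^ k) powr (1 / real k)"
      by (rule le_powr_inverse_of_power_le[OF lower \<open>t \<ge> 0\<close>])
  qed
qed

section \<open>Comparison with a positive function\<close>

lemma norm_funpow_le_if_dominated:
  assumes dominated: "\<And>g C z. (\<And>w. w \<in> K \<Longrightarrow> cmod (g w) \<le> C * v w) \<Longrightarrow> z \<in> K
      \<Longrightarrow> cmod (L g z) \<le> C * t * v z"
    and g: "\<And>w. w \<in> K \<Longrightarrow> cmod (g w) \<le> C * v w" and "z \<in> K"
  shows "cmod ((L ^^ k) g z) \<le> C * t ^ k * v z"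
  using \<open>z \<in> K\<close>
proof (induction k arbitrary: z)
  case 0
  then show ?case using g by simp
next
  case (Suc k)
  have "cmod (L ((L ^^ k) g) z) \<le> (C * t ^ k) * t * v z"
    using Suc by (intro dominated) auto
  then show ?case by (simp add: algebra_simps)
qed

lemma Re_funpow_ge_if_minorizing:
  assumes minorizing: "\<And>g c z. c \<ge> 0 \<Longrightarrow> (\<And>w. w \<in> K \<Longrightarrow> c * v w \<le> Re (g w)) \<Longrightarrow> z \<in> K
      \<Longrightarrow> c * t * v z \<le> Re (L g z)"
    and "t \<ge> 0" "c \<ge> 0" and g: "\<And>w. w \<in> K \<Longrightarrow> c * v w \<le> Re (g w)" and "z \<in> K"
  shows "c * t ^ k * v z \<le> Re ((L ^^ k) g z)"
  using \<open>z \<in> K\<close>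
proof (induction k arbitrary: z)
  case 0
  then show ?case using g by simp
next
  case (Suc k)
  have "(c * t ^ k) * t * v z \<le> Re (L ((L ^^ k) g) z)"
    using Suc \<open>t \<ge> 0\<close> \<open>c \<ge> 0\<close> by (intro minorizing) auto
  then show ?case by (simp add: algebra_simps)
qed

lemma funpow_unit_ball_bound_if_dominated:
  assumes K: "compact K" "K \<noteq> {}"
    and v: "continuous_on K v" "\<And>z. z \<in> K \<Longrightarrow> v z > 0" and "t \<ge> 0"
    and dominated: "\<And>g C z. (\<And>w. w \<in> K \<Longrightarrow> cmod (g w) \<le> C * v w) \<Longrightarrow> z \<in> K
      \<Longrightarrow> cmod (L g z) \<le> C * t * v z"
  obtains D where "D > 0"
    and "\<And>k f z. continuous_on K f \<Longrightarrow> supnorm K f \<le> 1 \<Longrightarrow> z \<in> K \<Longrightarrow> cmod ((L ^^ k) f z) \<le> t ^ k * D"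
proof -
  obtain zmin where "zmin \<in> K" and vmin: "\<And>z. z \<in> K \<Longrightarrow> v zmin \<le> v z"
    using continuous_attains_inf[OF K v(1)] by blast
  obtain zmax where vmax: "\<And>z. z \<in> K \<Longrightarrow> v z \<le> v zmax"
    using continuous_attains_sup[OF K v(1)] by blast
  have "v zmin > 0" using v(2)[OF \<open>zmin \<in> K\<close>] .
  show thesis
  proof (rule that)
    show "v zmax / v zmin > 0" using vmin[OF \<open>zmin \<in> K\<close>] \<open>v zmin > 0\<close> vmax[OF \<open>zmin \<in> K\<close>] by simp
    fix k f z assume f: "continuous_on K f" "supnorm K f \<le> 1" and "z \<in> K"
    have f_le: "cmod (f w) \<le> 1 / v zmin * v w" if "w \<in> K" for w
    proof -
      have "cmod (f w) \<le> 1" using norm_le_supnorm[OF K(1) f(1) that] f(2) by linarith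
      also have "1 \<le> 1 / v zmin * v w" using vmin[OF that] \<open>v zmin > 0\<close> by (simp add: field_simps)
      finally show ?thesis .
    qed
    have "cmod ((L ^^ k) f z) \<le> 1 / v zmin * t ^ k * v z"
      by (rule norm_funpow_le_if_dominated[OF dominated f_le \<open>z \<in> K\<close>])
    also have "\<dots> \<le> 1 / v zmin * t ^ k * v zmax"
      using vmax[OF \<open>z \<in> K\<close>] \<open>v zmin > 0\<close> \<open>t \<ge> 0\<close> by (intro mult_left_mono) auto
    finally show "cmod ((L ^^ k) f z) \<le> t ^ k * (v zmax / v zmin)" by simp
  qed
qed

lemma power_le_opnorm_funpow_if_minorizing:
  assumes L: "bounded_op_on K L N" and K: "compact K" "K \<noteq> {}"
    and v: "continuous_on K v" "\<And>z. z \<in> K \<Longrightarrow> v z > 0" and "t \<ge> 0"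
    and minorizing: "\<And>g c z. c \<ge> 0 \<Longrightarrow> (\<And>w. w \<in> K \<Longrightarrow> c * v w \<le> Re (g w)) \<Longrightarrow> z \<in> K
      \<Longrightarrow> c * t * v z \<le> Re (L g z)"
  shows "t ^ k \<le> opnorm K (L ^^ k)"
proof -
  obtain zmax where "zmax \<in> K" and vmax: "\<And>z. z \<in> K \<Longrightarrow> v z \<le> v zmax"
    using continuous_attains_sup[OF K v(1)] by blast
  have "v zmax > 0" using v(2)[OF \<open>zmax \<in> K\<close>] .
  define f where "f w = complex_of_real (v w / v zmax)" for w
  have "continuous_on K f" unfolding f_def using v(1) \<open>v zmax > 0\<close> by (intro continuous_intros) auto
  moreover have "supnorm K f \<le> 1"
  proof (rule supnorm_le[OF K(2)])
    fix w assume "w \<in> K"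
    then show "cmod (f w) \<le> 1"
      unfolding f_def norm_of_real using v(2)[of w] vmax[of w] \<open>v zmax > 0\<close> by simp
  qed
  ultimately have "cmod ((L ^^ k) f zmax) \<le> opnorm K (L ^^ k)"
    by (rule norm_le_opnorm_bounded_op[OF bounded_op_on_funpow[OF L] K _ _ \<open>zmax \<in> K\<close>])
  moreover have "1 / v zmax * t ^ k * v zmax \<le> Re ((L ^^ k) f zmax)"
    using \<open>zmax \<in> K\<close> \<open>v zmax > 0\<close>
    by (intro Re_funpow_ge_if_minorizing[OF minorizing \<open>t \<ge> 0\<close>]) (auto simp: f_def)
  ultimately show ?thesis using \<open>v zmax > 0\<close> complex_Re_le_cmod[of "(L ^^ k) f zmax"] by simp
qed

section \<open>The transfer operator and its truncations\<close>

text \<open>\<open>K\<close> plays the role of the closure of \<open>H\<close>; the assumptions are what the proof uses of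
  \<open>G\<^sub>\<gamma> \<subseteq> H\<close> and \<open>Re b \<ge> \<gamma> \<ge> 1\<close>.\<close>

locale cf_branches =
  fixes B :: "complex set" and s :: real and K :: "complex set"
  assumes compact: "compact K"
    and zero_mem: "0 \<in> K"
    and branch_mem: "\<And>z b. z \<in> K \<Longrightarrow> b \<in> B \<Longrightarrow> 1 / (z + b) \<in> K"
    and one_le_norm_add: "\<And>z b. z \<in> K \<Longrightarrow> b \<in> B \<Longrightarrow> 1 \<le> cmod (z + b)"
    and s_pos: "s > 0"
    and summable: "(\<lambda>b. cmod b powr (-2 * s)) summable_on B"
begin

definition weight :: "complex \<Rightarrow> complex \<Rightarrow> real" where
  "weight z b = cmod (z + b) powr (-2 * s)"

lemma nonempty: "K \<noteq> {}"
  using zero_mem by auto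

lemma weight_nonneg: "weight z b \<ge> 0"
  by (simp add: weight_def)

lemma weight_le_one: "z \<in> K \<Longrightarrow> b \<in> B \<Longrightarrow> weight z b \<le> 1"
  using powr_mono2'[of "-2 * s" 1 "cmod (z + b)"] one_le_norm_add s_pos by (simp add: weight_def)

lemma weight_le_const_mult:
  obtains C where "C \<ge> 0" "\<And>z b. z \<in> K \<Longrightarrow> b \<in> B \<Longrightarrow> weight z b \<le> C * cmod b powr (-2 * s)"
proof -
  obtain M0 where M0: "\<forall>z\<in>K. cmod z \<le> M0"
    using compact_imp_bounded[OF compact] by (auto simp: bounded_iff)
  define M where "M = max 1 M0"
  have "M \<ge> 1" and M: "\<And>z. z \<in> K \<Longrightarrow> cmod z \<le> M"
    using M0 by (auto simp: M_def le_max_iff_disj)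
  show thesis
  proof (rule that[of "(2 * M) powr (2 * s)"])
    fix z b assume "z \<in> K" "b \<in> B"
    have "cmod b \<ge> 1" using one_le_norm_add[OF zero_mem \<open>b \<in> B\<close>] by simp
    have "cmod b / (2 * M) \<le> cmod (z + b)"
    proof (cases "cmod b \<ge> 2 * M")
      case True
      have "cmod b - M \<le> cmod (z + b)"
        using M[OF \<open>z \<in> K\<close>] norm_triangle_ineq2[of b "-z"] by (simp add: add.commute)
      moreover have "cmod b / (2 * M) \<le> cmod b / 2" using \<open>M \<ge> 1\<close> by (intro divide_left_mono) auto
      ultimately show ?thesis using True by linarith
    next
      case False
      then have "cmod b / (2 * M) \<le> 1" using \<open>M \<ge> 1\<close> by simp
      with one_le_norm_add[OF \<open>z \<in> K\<close> \<open>b \<in> B\<close>] show ?thesis by linarith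
    qed
    moreover have "cmod b / (2 * M) > 0" using \<open>cmod b \<ge> 1\<close> \<open>M \<ge> 1\<close> by (intro divide_pos_pos) auto
    ultimately have "weight z b \<le> (cmod b / (2 * M)) powr (-2 * s)"
      unfolding weight_def using s_pos by (intro powr_mono2') auto
    also have "\<dots> = (2 * M) powr (2 * s) * cmod b powr (-2 * s)"
      using \<open>M \<ge> 1\<close> \<open>cmod b \<ge> 1\<close> by (simp add: powr_divide powr_minus divide_simps)
    finally show "weight z b \<le> (2 * M) powr (2 * s) * cmod b powr (-2 * s)" .
  qed simp
qed

lemma summable_on_weight_mult:
  assumes "z \<in> K" and G: "\<And>b. b \<in> B \<Longrightarrow> 0 \<le> G b \<and> G b \<le> C"
  shows "(\<lambda>b. weight z b * G b) summable_on B"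
proof -
  obtain CW where "CW \<ge> 0" and CW: "\<And>b. b \<in> B \<Longrightarrow> weight z b \<le> CW * cmod b powr (-2 * s)"
    using weight_le_const_mult \<open>z \<in> K\<close> by metis
  show ?thesis
  proof (rule summable_on_comparison_test)
    show "(\<lambda>b. (C * CW) * cmod b powr (-2 * s)) summable_on B"
      using summable by (rule summable_on_cmult_right)
    show "weight z b * G b \<le> (C * CW) * cmod b powr (-2 * s)" if "b \<in> B" for b
      using mult_mono[OF CW[OF that], of "G b" C] G[OF that] weight_nonneg \<open>CW \<ge> 0\<close>
      by (simp add: algebra_simps)
    show "0 \<le> weight z b * G b" if "b \<in> B" for b using G[OF that] weight_nonneg by simp
  qed
qed

lemma summable_on_weight_comp:
  assumes v: "continuous_on K v" "\<And>w. w \<in> K \<Longrightarrow> v w \<ge> 0" and "z \<in> K"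
  shows "(\<lambda>b. weight z b * v (1 / (z + b))) summable_on B"
proof -
  obtain zmax where V: "\<And>w. w \<in> K \<Longrightarrow> v w \<le> v zmax"
    using continuous_attains_sup[OF compact nonempty v(1)] by blast
  show ?thesis
    using branch_mem[OF \<open>z \<in> K\<close>] v(2) V by (intro summable_on_weight_mult[OF \<open>z \<in> K\<close>, of _ "v zmax"]) auto
qed

lemma finite_truncation: "finite {b \<in> B. cmod b \<le> R}"
proof (rule ccontr)
  assume "infinite {b \<in> B. cmod b \<le> R}"
  have "R \<ge> 1"
  proof (rule ccontr)
    assume "\<not> R \<ge> 1"
    then have "{b \<in> B. cmod b \<le> R} = {}" using one_le_norm_add[OF zero_mem] by force
    with \<open>infinite _\<close> show False by simp
  qed
  define e where "e = R powr (-2 * s)"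
  have "e > 0" using \<open>R \<ge> 1\<close> by (simp add: e_def)
  obtain n :: nat where n: "real n > (\<Sum>\<^sub>\<infinity>b\<in>B. cmod b powr (-2 * s)) / e"
    using reals_Archimedean2 by blast
  obtain F where F: "F \<subseteq> {b \<in> B. cmod b \<le> R}" "finite F" "card F = n"
    using infinite_arbitrarily_large[OF \<open>infinite _\<close>] by blast
  have "real n * e = (\<Sum>b\<in>F. e)" using F by simp
  also have "\<dots> \<le> (\<Sum>b\<in>F. cmod b powr (-2 * s))"
  proof (rule sum_mono)
    fix b assume "b \<in> F"
    then have "1 \<le> cmod b" "cmod b \<le> R" using F(1) one_le_norm_add[OF zero_mem] by auto
    then show "e \<le> cmod b powr (-2 * s)" unfolding e_def using s_pos by (intro powr_mono2') auto
  qed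
  also have "\<dots> = (\<Sum>\<^sub>\<infinity>b\<in>F. cmod b powr (-2 * s))" using F by simp
  also have "\<dots> \<le> (\<Sum>\<^sub>\<infinity>b\<in>B. cmod b powr (-2 * s))"
    using F summable by (intro infsum_mono2) auto
  finally show False using n \<open>e > 0\<close> by (simp add: field_simps)
qed

lemma Lop_eq: "Lop B s g z = (\<Sum>\<^sub>\<infinity>b\<in>B. complex_of_real (weight z b) * g (1 / (z + b)))"
  unfolding Lop_def weight_def ..

lemma Lop_cong: "z \<in> K \<Longrightarrow> (\<And>w. w \<in> K \<Longrightarrow> g w = h w) \<Longrightarrow> Lop B s g z = Lop B s h z"
  unfolding Lop_eq by (rule infsum_cong) (simp add: branch_mem)

lemma Lop_of_real:
  assumes "continuous_on K v" "\<And>w. w \<in> K \<Longrightarrow> v w \<ge> 0" "z \<in> K"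
  shows "Lop B s (\<lambda>w. complex_of_real (v w)) z
    = complex_of_real (\<Sum>\<^sub>\<infinity>b\<in>B. weight z b * v (1 / (z + b)))"
proof -
  have "((\<lambda>b. complex_of_real (weight z b * v (1 / (z + b))))
      has_sum complex_of_real (\<Sum>\<^sub>\<infinity>b\<in>B. weight z b * v (1 / (z + b)))) B"
    by (intro has_sum_of_real has_sum_infsum summable_on_weight_comp[OF assms])
  then show ?thesis unfolding Lop_eq by (simp add: infsumI)
qed

lemma norm_Lop_le:
  assumes v: "continuous_on K v" "\<And>w. w \<in> K \<Longrightarrow> v w \<ge> 0" and "z \<in> K"
    and g: "\<And>w. w \<in> K \<Longrightarrow> cmod (g w) \<le> C * v w"
  shows "cmod (Lop B s g z) \<le> C * (\<Sum>\<^sub>\<infinity>b\<in>B. weight z b * v (1 / (z + b)))"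
proof -
  define t where "t b = complex_of_real (weight z b) * g (1 / (z + b))" for b
  have t_le: "cmod (t b) \<le> C * (weight z b * v (1 / (z + b)))" if "b \<in> B" for b
  proof -
    have "cmod (t b) = weight z b * cmod (g (1 / (z + b)))"
      by (simp add: t_def norm_mult abs_of_nonneg weight_nonneg)
    also have "\<dots> \<le> weight z b * (C * v (1 / (z + b)))"
      by (rule mult_left_mono[OF g[OF branch_mem[OF \<open>z \<in> K\<close> that]] weight_nonneg])
    finally show ?thesis by (simp add: algebra_simps)
  qed
  have summable_bound: "(\<lambda>b. C * (weight z b * v (1 / (z + b)))) summable_on B"
    using summable_on_weight_comp[OF v \<open>z \<in> K\<close>] by (rule summable_on_cmult_right)
  have "(\<lambda>b. cmod (t b)) summable_on B"
    by (rule Infinite_Sum.abs_summable_on_comparison_test'[OF summable_bound t_le])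
  then have "cmod (Lop B s g z) \<le> (\<Sum>\<^sub>\<infinity>b\<in>B. cmod (t b))"
    unfolding Lop_eq t_def[symmetric] by (rule norm_infsum_bound)
  also have "\<dots> \<le> (\<Sum>\<^sub>\<infinity>b\<in>B. C * (weight z b * v (1 / (z + b))))"
    using \<open>(\<lambda>b. cmod (t b)) summable_on B\<close> summable_bound t_le by (rule infsum_mono)
  finally show ?thesis by (simp add: infsum_cmult_right')
qed

lemma Lop_funpow_of_real_eigen:
  assumes v: "continuous_on K v" "\<And>w. w \<in> K \<Longrightarrow> v w \<ge> 0"
    and eigen: "\<And>z. z \<in> K \<Longrightarrow> (\<Sum>\<^sub>\<infinity>b\<in>B. weight z b * v (1 / (z + b))) = t * v z"
    and "t \<ge> 0" "c \<ge> 0" "z \<in> K"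
  shows "(Lop B s ^^ k) (\<lambda>w. complex_of_real (c * v w)) z = complex_of_real (c * t ^ k * v z)"
  using \<open>z \<in> K\<close>
proof (induction k arbitrary: z)
  case (Suc k)
  have cont: "continuous_on K (\<lambda>w. c * t ^ k * v w)" using v(1) by (intro continuous_intros)
  have nonneg: "c * t ^ k * v w \<ge> 0" if "w \<in> K" for w using v(2)[OF that] \<open>t \<ge> 0\<close> \<open>c \<ge> 0\<close> by simp
  have "(Lop B s ^^ Suc k) (\<lambda>w. complex_of_real (c * v w)) z
      = Lop B s ((Lop B s ^^ k) (\<lambda>w. complex_of_real (c * v w))) z" by simp
  also have "\<dots> = Lop B s (\<lambda>w. complex_of_real (c * t ^ k * v w)) z"
    by (rule Lop_cong[OF Suc.prems]) (rule Suc.IH)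
  also have "\<dots> = complex_of_real (\<Sum>\<^sub>\<infinity>b\<in>B. weight z b * (c * t ^ k * v (1 / (z + b))))"
    by (rule Lop_of_real[OF cont nonneg Suc.prems])
  also have "\<dots> = complex_of_real (c * t ^ Suc k * v z)"
    using eigen[OF Suc.prems] by (simp add: infsum_cmult_right' algebra_simps)
  finally show ?case .
qed simp

lemma power_le_opnorm_Lop_funpow:
  assumes v: "continuous_on K v" "\<And>w. w \<in> K \<Longrightarrow> v w > 0" and "t \<ge> 0"
    and eigen: "\<And>z. z \<in> K \<Longrightarrow> (\<Sum>\<^sub>\<infinity>b\<in>B. weight z b * v (1 / (z + b))) = t * v z"
    and bounded: "\<And>f z. continuous_on K f \<Longrightarrow> supnorm K f \<le> 1 \<Longrightarrow> z \<in> K \<Longrightarrow> cmod ((Lop B s ^^ k) f z) \<le> C"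
  shows "t ^ k \<le> opnorm K (Lop B s ^^ k)"
proof -
  obtain zmax where "zmax \<in> K" and vmax: "\<And>z. z \<in> K \<Longrightarrow> v z \<le> v zmax"
    using continuous_attains_sup[OF compact nonempty v(1)] by blast
  have "v zmax > 0" using v(2)[OF \<open>zmax \<in> K\<close>] .
  define f where "f w = complex_of_real (1 / v zmax * v w)" for w
  have "continuous_on K f" unfolding f_def using v(1) by (intro continuous_intros)
  moreover have "supnorm K f \<le> 1"
  proof (rule supnorm_le[OF nonempty])
    fix w assume "w \<in> K"
    then show "cmod (f w) \<le> 1"
      unfolding f_def norm_of_real using v(2)[of w] vmax[of w] \<open>v zmax > 0\<close> by simp
  qed
  ultimately have "cmod ((Lop B s ^^ k) f zmax) \<le> opnorm K (Lop B s ^^ k)"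
    using norm_le_opnorm[where L = "Lop B s ^^ k", OF nonempty bounded] \<open>zmax \<in> K\<close> by blast
  moreover have "(Lop B s ^^ k) f zmax = complex_of_real (1 / v zmax * t ^ k * v zmax)"
    unfolding f_def using v(2) \<open>v zmax > 0\<close> \<open>zmax \<in> K\<close>
    by (intro Lop_funpow_of_real_eigen[OF v(1) _ eigen \<open>t \<ge> 0\<close>]) (auto intro: less_imp_le)
  ultimately show ?thesis using \<open>t \<ge> 0\<close> \<open>v zmax > 0\<close> by (simp add: norm_power)
qed

lemma spectral_radius_Lop:
  assumes v: "continuous_on K v" "\<And>w. w \<in> K \<Longrightarrow> v w > 0" and "t \<ge> 0"
    and eigen: "\<And>z. z \<in> K \<Longrightarrow> (\<Sum>\<^sub>\<infinity>b\<in>B. weight z b * v (1 / (z + b))) = t * v z"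
  shows "spectral_radius K (Lop B s) = t"
proof -
  have dominated: "cmod (Lop B s g z) \<le> C * t * v z"
    if "\<And>w. w \<in> K \<Longrightarrow> cmod (g w) \<le> C * v w" "z \<in> K" for g C z
    using norm_Lop_le[OF v(1) _ \<open>z \<in> K\<close> that(1)] v(2) eigen[OF \<open>z \<in> K\<close>]
    by (simp add: less_imp_le mult.assoc)
  obtain D where "D > 0" and D: "\<And>k f z. continuous_on K f \<Longrightarrow> supnorm K f \<le> 1 \<Longrightarrow> z \<in> K
      \<Longrightarrow> cmod ((Lop B s ^^ k) f z) \<le> t ^ k * D"
    using funpow_unit_ball_bound_if_dominated[where L = "Lop B s", OF compact nonempty v \<open>t \<ge> 0\<close> dominated]
    by blast
  have "t ^ k \<le> opnorm K (Lop B s ^^ k)" for k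
    by (rule power_le_opnorm_Lop_funpow[OF v \<open>t \<ge> 0\<close> eigen D])
  moreover have "opnorm K (Lop B s ^^ k) \<le> t ^ k * D" for k
    by (rule opnorm_le[OF nonempty D])
  ultimately show ?thesis by (rule spectral_radius_eqI[OF \<open>t \<ge> 0\<close> \<open>D > 0\<close>])
qed

lemma LopR_eq:
  "LopR B s R \<alpha> g z = (\<Sum>b\<in>{b \<in> B. cmod b \<le> R}. complex_of_real (weight z b) * g (1 / (z + b)))
     + complex_of_real \<alpha> * g 0"
  unfolding LopR_def weight_def ..

lemma norm_LopR_le:
  assumes "z \<in> K" "\<alpha> \<ge> 0" and g: "\<And>w. w \<in> K \<Longrightarrow> cmod (g w) \<le> C * v w"
  shows "cmod (LopR B s R \<alpha> g z)
    \<le> C * ((\<Sum>b\<in>{b \<in> B. cmod b \<le> R}. weight z b * v (1 / (z + b))) + \<alpha> * v 0)"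
proof -
  have "cmod (LopR B s R \<alpha> g z)
      \<le> cmod (\<Sum>b\<in>{b \<in> B. cmod b \<le> R}. complex_of_real (weight z b) * g (1 / (z + b)))
        + cmod (complex_of_real \<alpha> * g 0)"
    unfolding LopR_eq by (rule norm_triangle_ineq)
  also have "\<dots> \<le> (\<Sum>b\<in>{b \<in> B. cmod b \<le> R}. cmod (complex_of_real (weight z b) * g (1 / (z + b))))
        + cmod (complex_of_real \<alpha> * g 0)"
    by (rule add_right_mono[OF norm_sum])
  also have "\<dots> = (\<Sum>b\<in>{b \<in> B. cmod b \<le> R}. weight z b * cmod (g (1 / (z + b)))) + \<alpha> * cmod (g 0)"
    using \<open>\<alpha> \<ge> 0\<close> by (simp add: norm_mult abs_of_nonneg weight_nonneg)
  also have "\<dots> \<le> (\<Sum>b\<in>{b \<in> B. cmod b \<le> R}. weight z b * (C * v (1 / (z + b)))) + \<alpha> * (C * v 0)"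
    using g[OF zero_mem] g[OF branch_mem[OF \<open>z \<in> K\<close>]] weight_nonneg \<open>\<alpha> \<ge> 0\<close>
    by (intro add_mono sum_mono mult_left_mono) auto
  finally show ?thesis by (simp add: sum_distrib_left algebra_simps)
qed

lemma Re_LopR_ge:
  assumes "z \<in> K" "\<alpha> \<ge> 0" and g: "\<And>w. w \<in> K \<Longrightarrow> c * v w \<le> Re (g w)"
  shows "c * ((\<Sum>b\<in>{b \<in> B. cmod b \<le> R}. weight z b * v (1 / (z + b))) + \<alpha> * v 0)
    \<le> Re (LopR B s R \<alpha> g z)"
proof -
  have "c * ((\<Sum>b\<in>{b \<in> B. cmod b \<le> R}. weight z b * v (1 / (z + b))) + \<alpha> * v 0)
      = (\<Sum>b\<in>{b \<in> B. cmod b \<le> R}. weight z b * (c * v (1 / (z + b)))) + \<alpha> * (c * v 0)"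
    by (simp add: sum_distrib_left algebra_simps)
  also have "\<dots> \<le> (\<Sum>b\<in>{b \<in> B. cmod b \<le> R}. weight z b * Re (g (1 / (z + b)))) + \<alpha> * Re (g 0)"
    using g[OF zero_mem] g[OF branch_mem[OF \<open>z \<in> K\<close>]] weight_nonneg \<open>\<alpha> \<ge> 0\<close>
    by (intro add_mono sum_mono mult_left_mono) auto
  also have "\<dots> = Re (LopR B s R \<alpha> g z)"
    unfolding LopR_eq by (simp add: Re_sum)
  finally show ?thesis .
qed

lemma norm_LopR_le_card_mult:
  assumes "z \<in> K" "\<alpha> \<ge> 0" and g: "\<And>w. w \<in> K \<Longrightarrow> cmod (g w) \<le> G"
  shows "cmod (LopR B s R \<alpha> g z) \<le> (real (card {b \<in> B. cmod b \<le> R}) + \<alpha>) * G"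
proof -
  have "G \<ge> 0" using g[OF zero_mem] norm_ge_zero order_trans by blast
  have sum_le: "(\<Sum>b\<in>{b \<in> B. cmod b \<le> R}. weight z b * 1) \<le> real (card {b \<in> B. cmod b \<le> R})"
    using sum_mono[of "{b \<in> B. cmod b \<le> R}" "\<lambda>b. weight z b * 1" "\<lambda>_. 1"] weight_le_one[OF \<open>z \<in> K\<close>]
    by simp
  have "cmod (LopR B s R \<alpha> g z) \<le> G * ((\<Sum>b\<in>{b \<in> B. cmod b \<le> R}. weight z b * 1) + \<alpha> * 1)"
    using g by (intro norm_LopR_le[OF assms(1,2)]) simp
  also have "\<dots> \<le> G * (real (card {b \<in> B. cmod b \<le> R}) + \<alpha>)"
    using sum_le \<open>G \<ge> 0\<close> by (intro mult_left_mono) auto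
  finally show ?thesis by (simp add: mult.commute)
qed

lemma continuous_on_branch_comp:
  assumes "continuous_on K g" "b \<in> B"
  shows "continuous_on K (\<lambda>z. g (1 / (z + b)))"
proof (rule continuous_on_compose2[OF assms(1)])
  have "z + b \<noteq> 0" if "z \<in> K" for z using one_le_norm_add[OF that assms(2)] by auto
  then show "continuous_on K (\<lambda>z. 1 / (z + b))" by (intro continuous_intros) auto
  show "(\<lambda>z. 1 / (z + b)) ` K \<subseteq> K" using branch_mem[OF _ assms(2)] by auto
qed

lemma continuous_on_weight: "b \<in> B \<Longrightarrow> continuous_on K (\<lambda>z. weight z b)"
  unfolding weight_def using one_le_norm_add by (intro continuous_intros) fastforce

lemma bounded_op_on_LopR:
  assumes "\<alpha> \<ge> 0"
  shows "bounded_op_on K (LopR B s R \<alpha>) (real (card {b \<in> B. cmod b \<le> R}) + \<alpha>)"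
proof (rule bounded_op_onI)
  show "LopR B s R \<alpha> (\<lambda>z. c * g z) = (\<lambda>z. c * LopR B s R \<alpha> g z)" for c g
  proof
    fix z
    show "LopR B s R \<alpha> (\<lambda>z. c * g z) z = c * LopR B s R \<alpha> g z"
      unfolding LopR_eq by (simp add: sum_distrib_left algebra_simps)
  qed
  show "LopR B s R \<alpha> g z = LopR B s R \<alpha> h z" if gh: "\<And>z. z \<in> K \<Longrightarrow> g z = h z" and "z \<in> K" for g h z
  proof -
    have "(\<Sum>b\<in>{b \<in> B. cmod b \<le> R}. complex_of_real (weight z b) * g (1 / (z + b)))
        = (\<Sum>b\<in>{b \<in> B. cmod b \<le> R}. complex_of_real (weight z b) * h (1 / (z + b)))"
      by (rule sum.cong[OF refl]) (simp add: gh branch_mem[OF \<open>z \<in> K\<close>])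
    then show ?thesis unfolding LopR_eq by (simp add: gh[OF zero_mem])
  qed
  show "0 \<le> real (card {b \<in> B. cmod b \<le> R}) + \<alpha>" using assms by simp
  show "cmod (LopR B s R \<alpha> g z) \<le> (real (card {b \<in> B. cmod b \<le> R}) + \<alpha>) * G"
    if "\<And>z. z \<in> K \<Longrightarrow> cmod (g z) \<le> G" and "z \<in> K" for g G z
    by (rule norm_LopR_le_card_mult[OF \<open>z \<in> K\<close> assms that(1)])
  show "continuous_on K (LopR B s R \<alpha> g)" if "continuous_on K g" for g
    unfolding LopR_eq[abs_def] using that continuous_on_branch_comp continuous_on_weight zero_mem
    by (intro continuous_intros) auto
qed

lemma spectral_radius_LopR_le:
  assumes "\<alpha> \<ge> 0" and v: "continuous_on K v" "\<And>w. w \<in> K \<Longrightarrow> v w > 0" and "t \<ge> 0"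
    and subeigen: "\<And>z. z \<in> K \<Longrightarrow> (\<Sum>b\<in>{b \<in> B. cmod b \<le> R}. weight z b * v (1 / (z + b))) + \<alpha> * v 0 \<le> t * v z"
  shows "spectral_radius K (LopR B s R \<alpha>) \<le> t"
proof -
  have dominated: "cmod (LopR B s R \<alpha> g z) \<le> C * t * v z"
    if g: "\<And>w. w \<in> K \<Longrightarrow> cmod (g w) \<le> C * v w" and "z \<in> K" for g C z
  proof -
    have "0 \<le> C * v z" using g[OF \<open>z \<in> K\<close>] norm_ge_zero order_trans by blast
    then have "0 \<le> C" using v(2)[OF \<open>z \<in> K\<close>] by (simp add: zero_le_mult_iff)
    have "cmod (LopR B s R \<alpha> g z)
        \<le> C * ((\<Sum>b\<in>{b \<in> B. cmod b \<le> R}. weight z b * v (1 / (z + b))) + \<alpha> * v 0)"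
      by (rule norm_LopR_le[OF \<open>z \<in> K\<close> \<open>\<alpha> \<ge> 0\<close> g])
    also have "\<dots> \<le> C * (t * v z)" by (rule mult_left_mono[OF subeigen[OF \<open>z \<in> K\<close>] \<open>0 \<le> C\<close>])
    finally show ?thesis by (simp add: mult.assoc)
  qed
  obtain D where "D > 0" and D: "\<And>k f z. continuous_on K f \<Longrightarrow> supnorm K f \<le> 1 \<Longrightarrow> z \<in> K
      \<Longrightarrow> cmod ((LopR B s R \<alpha> ^^ k) f z) \<le> t ^ k * D"
    using funpow_unit_ball_bound_if_dominated[where L = "LopR B s R \<alpha>", OF compact nonempty v \<open>t \<ge> 0\<close> dominated]
    by blast
  show ?thesis
    using bounded_op_on_LopR[OF \<open>\<alpha> \<ge> 0\<close>] compact nonempty \<open>t \<ge> 0\<close> \<open>D > 0\<close>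
  proof (rule spectral_radius_le)
    show "opnorm K (LopR B s R \<alpha> ^^ k) \<le> t ^ k * D" for k
      by (rule opnorm_le[OF nonempty D[where k=k]])
  qed
qed

lemma spectral_radius_LopR_ge:
  assumes "\<alpha> \<ge> 0" and v: "continuous_on K v" "\<And>w. w \<in> K \<Longrightarrow> v w > 0" and "t \<ge> 0"
    and supereigen: "\<And>z. z \<in> K \<Longrightarrow> t * v z \<le> (\<Sum>b\<in>{b \<in> B. cmod b \<le> R}. weight z b * v (1 / (z + b))) + \<alpha> * v 0"
  shows "t \<le> spectral_radius K (LopR B s R \<alpha>)"
  using bounded_op_on_LopR[OF \<open>\<alpha> \<ge> 0\<close>] compact nonempty \<open>t \<ge> 0\<close>
proof (rule spectral_radius_ge)
  show "t ^ k \<le> opnorm K (LopR B s R \<alpha> ^^ k)" for k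
  proof (rule power_le_opnorm_funpow_if_minorizing[OF bounded_op_on_LopR[OF \<open>\<alpha> \<ge> 0\<close>] compact nonempty v \<open>t \<ge> 0\<close>])
    fix g c z assume "c \<ge> 0" and g: "\<And>w. w \<in> K \<Longrightarrow> c * v w \<le> Re (g w)" and "z \<in> K"
    have "c * t * v z \<le> c * ((\<Sum>b\<in>{b \<in> B. cmod b \<le> R}. weight z b * v (1 / (z + b))) + \<alpha> * v 0)"
      using mult_left_mono[OF supereigen[OF \<open>z \<in> K\<close>] \<open>c \<ge> 0\<close>] by (simp add: mult.assoc)
    also have "\<dots> \<le> Re (LopR B s R \<alpha> g z)" by (rule Re_LopR_ge[OF \<open>z \<in> K\<close> \<open>\<alpha> \<ge> 0\<close> g])
    finally show "c * t * v z \<le> Re (LopR B s R \<alpha> g z)" .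
  qed
qed

lemma Lop_eigenvalue_nonneg_real:
  assumes v: "continuous_on K v" "\<And>w. w \<in> K \<Longrightarrow> v w > 0"
    and eigen: "\<And>z. z \<in> K \<Longrightarrow> Lop B s (\<lambda>w. complex_of_real (v w)) z = \<mu> * complex_of_real (v z)"
  obtains t where "t \<ge> 0" "\<And>z. z \<in> K \<Longrightarrow> (\<Sum>\<^sub>\<infinity>b\<in>B. weight z b * v (1 / (z + b))) = t * v z"
proof -
  define T where "T z = (\<Sum>\<^sub>\<infinity>b\<in>B. weight z b * v (1 / (z + b)))" for z
  have v_nonneg: "\<And>w. w \<in> K \<Longrightarrow> v w \<ge> 0" using v(2) less_imp_le by blast
  have T: "complex_of_real (T z) = \<mu> * complex_of_real (v z)" if "z \<in> K" for z
    using Lop_of_real[OF v(1) v_nonneg that] eigen[OF that] by (simp add: T_def)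
  have "\<mu> = complex_of_real (T 0 / v 0)"
    using T[OF zero_mem] v(2)[OF zero_mem] by (simp add: field_simps)
  then have "T z = T 0 / v 0 * v z" if "z \<in> K" for z
    using T[OF that] by (metis of_real_eq_iff of_real_mult)
  moreover have "T 0 \<ge> 0"
    unfolding T_def using v_nonneg branch_mem[OF zero_mem] weight_nonneg
    by (intro infsum_nonneg) simp
  then have "T 0 / v 0 \<ge> 0" using v(2)[OF zero_mem] by simp
  ultimately show thesis using that unfolding T_def by blast
qed

lemma infsum_weight_split:
  assumes v: "continuous_on K v" "\<And>w. w \<in> K \<Longrightarrow> v w \<ge> 0" and "z \<in> K"
  shows "(\<Sum>\<^sub>\<infinity>b\<in>B. weight z b * v (1 / (z + b)))
    = (\<Sum>b\<in>{b \<in> B. cmod b \<le> R}. weight z b * v (1 / (z + b)))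
      + (\<Sum>\<^sub>\<infinity>b\<in>{b \<in> B. cmod b > R}. weight z b * v (1 / (z + b)))"
proof -
  have "B = {b \<in> B. cmod b \<le> R} \<union> {b \<in> B. cmod b > R}" by auto
  moreover have "(\<lambda>b. weight z b * v (1 / (z + b))) summable_on {b \<in> B. cmod b > R}"
    by (rule summable_on_subset[OF summable_on_weight_comp[OF v \<open>z \<in> K\<close>]]) auto
  ultimately show ?thesis
    using infsum_Un_disjoint[of "\<lambda>b. weight z b * v (1 / (z + b))" "{b \<in> B. cmod b \<le> R}" "{b \<in> B. cmod b > R}"]
      finite_truncation by fastforce
qed

end

lemma inverse_mem_cball_of_Re_ge:
  fixes w :: complex
  assumes "\<gamma> > 0" "Re w \<ge> \<gamma>"
  shows "1 / w \<in> cball (complex_of_real (1 / (2 * \<gamma>))) (1 / (2 * \<gamma>))"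
proof -
  define c x y where "c = 1 / (2 * \<gamma>)" and "x = Re w" and "y = Im w"
  define n where "n = x\<^sup>2 + y\<^sup>2"
  have "x > 0" "c > 0" "2 * c * x \<ge> 1" using assms by (auto simp: c_def x_def field_simps)
  then have "n > 0" by (simp add: n_def add_pos_nonneg)
  have "(x / n)\<^sup>2 + (y / n)\<^sup>2 = n / n\<^sup>2" by (simp add: n_def power_divide add_divide_distrib)
  also have "\<dots> = 1 / n" using \<open>n > 0\<close> by (simp add: power2_eq_square)
  finally have "(c - x / n)\<^sup>2 + (- y / n)\<^sup>2 = c\<^sup>2 - (2 * c * x - 1) / n"
    by (simp add: power2_diff diff_divide_distrib)
  also have "\<dots> \<le> c\<^sup>2" using \<open>2 * c * x \<ge> 1\<close> \<open>n > 0\<close> by simp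
  finally have "sqrt ((c - x / n)\<^sup>2 + (- y / n)\<^sup>2) \<le> c"
    using \<open>c > 0\<close> real_sqrt_le_mono by fastforce
  moreover have "dist (complex_of_real c) (1 / w) = sqrt ((c - x / n)\<^sup>2 + (- y / n)\<^sup>2)"
    by (simp add: dist_norm cmod_def Re_divide Im_divide x_def y_def n_def power2_eq_square)
  ultimately show ?thesis by (simp add: c_def)
qed

lemma cf_branches_closure:
  assumes "\<gamma> \<ge> 1" "B \<subseteq> {z. Re z \<ge> \<gamma>}" "s > 0" "(\<lambda>b. cmod b powr (-2 * s)) summable_on B"
    and "bounded H" "ball (complex_of_real (1 / (2 * \<gamma>))) (1 / (2 * \<gamma>)) \<subseteq> H" "\<forall>z\<in>H. Re z > 0"
  shows "cf_branches B s (closure H)"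
proof
  have cball_sub: "cball (complex_of_real (1 / (2 * \<gamma>))) (1 / (2 * \<gamma>)) \<subseteq> closure H"
    using closure_mono[OF assms(6)] assms(1) by simp
  have Re_ge: "Re (z + b) \<ge> \<gamma>" if "z \<in> closure H" "b \<in> B" for z b
  proof -
    have "closure H \<subseteq> {z. Re z \<ge> 0}"
      using assms(7) by (intro closure_minimal) (auto intro: less_imp_le closed_halfspace_Re_ge)
    then have "Re z \<ge> 0" using that(1) by auto
    moreover have "Re b \<ge> \<gamma>" using that(2) assms(2) by auto
    ultimately show ?thesis by simp
  qed
  show "compact (closure H)" using assms(5) by (simp add: compact_eq_bounded_closed bounded_closure)
  have "dist (complex_of_real (1 / (2 * \<gamma>))) 0 = 1 / (2 * \<gamma>)"
    using assms(1) by (simp only: dist_commute dist_0_norm norm_of_real) simp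
  then show "0 \<in> closure H" using cball_sub by auto
  show "1 / (z + b) \<in> closure H" if "z \<in> closure H" "b \<in> B" for z b
    using inverse_mem_cball_of_Re_ge[OF _ Re_ge[OF that]] cball_sub assms(1) by auto
  show "1 \<le> cmod (z + b)" if "z \<in> closure H" "b \<in> B" for z b
    using Re_ge[OF that] complex_Re_le_cmod[of "z + b"] assms(1) by linarith
qed (use assms in auto)

text \<open>Mild regularity and openness of \<open>H\<close> and countability of \<open>B\<close> serve in the paper to produce
  the eigenfunction \<open>v\<close>, which is assumed here.\<close>

theorem theorem5p11:
  fixes \<gamma> s R \<delta> \<eta> :: real and B H :: "complex set" and v :: "complex \<Rightarrow> real"
  assumes "\<gamma> \<ge> 1"
    and "countable B" and "infinite B" and "B \<subseteq> {z. Re z \<ge> \<gamma>}"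
    and "s > 0" and "(\<lambda>b. cmod b powr (-2 * s)) summable_on B"
    and "bounded H" and "open H" and "mildly_regular H"
    and "ball (complex_of_real (1 / (2 * \<gamma>))) (1 / (2 * \<gamma>)) \<subseteq> H"
    and "\<forall>z\<in>H. Re z > 0"
    and "continuous_on (closure H) v" and "\<forall>z\<in>closure H. v z > 0"
    and "\<exists>\<mu>::complex. \<forall>z\<in>closure H. Lop B s (\<lambda>w. complex_of_real (v w)) z = \<mu> * complex_of_real (v z)"
    and "R > 2"
    and "\<delta> > 0" and "\<eta> \<ge> 0"
    and "\<forall>z\<in>closure H.
           \<eta> * v 0 \<le> (\<Sum>\<^sub>\<infinity>b\<in>{b\<in>B. cmod b > R}. cmod (z + b) powr (-2 * s) * v (1 / (z + b)))
         \<and> (\<Sum>\<^sub>\<infinity>b\<in>{b\<in>B. cmod b > R}. cmod (z + b) powr (-2 * s) * v (1 / (z + b))) \<le> \<delta> * v 0"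
  shows "spectral_radius (closure H) (LopR B s R \<eta>) \<le> spectral_radius (closure H) (Lop B s)
       \<and> spectral_radius (closure H) (Lop B s) \<le> spectral_radius (closure H) (LopR B s R \<delta>)"
proof -
  interpret cf_branches B s "closure H"
    using assms(1,4-7,10,11) by (rule cf_branches_closure)
  note v = assms(12) assms(13)[rule_format]
  have v_nonneg: "\<And>z. z \<in> closure H \<Longrightarrow> v z \<ge> 0" using v(2) less_imp_le by blast
  obtain \<mu> where \<mu>: "\<And>z. z \<in> closure H \<Longrightarrow> Lop B s (\<lambda>w. complex_of_real (v w)) z = \<mu> * complex_of_real (v z)"
    using assms(14) by blast
  obtain t where "t \<ge> 0" and eigen: "\<And>z. z \<in> closure H \<Longrightarrow> (\<Sum>\<^sub>\<infinity>b\<in>B. weight z b * v (1 / (z + b))) = t * v z"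
    using Lop_eigenvalue_nonneg_real[OF v \<mu>] by blast
  define head where "head z = (\<Sum>b\<in>{b \<in> B. cmod b \<le> R}. weight z b * v (1 / (z + b)))" for z
  have head_tail: "head z + \<eta> * v 0 \<le> t * v z \<and> t * v z \<le> head z + \<delta> * v 0" if "z \<in> closure H" for z
    using assms(18) that infsum_weight_split[OF v(1) v_nonneg that, of R] eigen[OF that]
    by (auto simp: head_def weight_def)
  have "spectral_radius (closure H) (LopR B s R \<eta>) \<le> t"
    using head_tail by (intro spectral_radius_LopR_le[OF assms(17) v \<open>t \<ge> 0\<close>]) (auto simp: head_def)
  moreover have "spectral_radius (closure H) (Lop B s) = t"
    by (rule spectral_radius_Lop[OF v \<open>t \<ge> 0\<close> eigen])
  moreover have "t \<le> spectral_radius (closure H) (LopR B s R \<delta>)"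
    using head_tail assms(16) by (intro spectral_radius_LopR_ge[OF _ v \<open>t \<ge> 0\<close>]) (auto simp: head_def)
  ultimately show ?thesis by simp
qed

end
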